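(* Let $k$ be a field, $V$ a $k$-vector space and $\varphi,\psi\in\mathrm{End}_k(V)$ finite potent endomorphisms such that $(1+\varphi)(1+\psi)=1$. Then $\langle\varphi,\psi\rangle:=\varphi\,k[\varphi,\psi]+\psi\,k[\varphi,\psi]$ is a finite potent subspace of $\mathrm{End}_k(V)$.
   Context: An endomorphism $\varphi$ of $V$ is finite potent if $\varphi^nV$ is finite dimensional for some $n$. $k[\varphi,\psi]$ is the $k$-subalgebra of $\mathrm{End}_k(V)$ generated by $\varphi,\psi$. A subspace $F\subseteq\mathrm{End}_k(V)$ is finite potent if there is $n$ such that for any $\varphi_1,\dots,\varphi_n\in F$ the space $\varphi_1\cdots\varphi_nV$ is finite dimensional. *)

theory Defs
  imports Complex_Main
begin

definition fin_dim_sub :: "('k::field \<Rightarrow> 'v::ab_group_add \<Rightarrow> 'v) \<Rightarrow> 'v set \<Rightarrow> bool" where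
  "fin_dim_sub scale S \<longleftrightarrow> (\<exists>B. finite B \<and> module.span scale B = S)"

definition finite_potent :: "('k::field \<Rightarrow> 'v::ab_group_add \<Rightarrow> 'v) \<Rightarrow> ('v \<Rightarrow> 'v) \<Rightarrow> bool" where
  "finite_potent scale f \<longleftrightarrow> (\<exists>n. fin_dim_sub scale (range (f ^^ n)))"

inductive_set gen_alg :: "('k::field \<Rightarrow> 'v::ab_group_add \<Rightarrow> 'v) \<Rightarrow> ('v \<Rightarrow> 'v) \<Rightarrow> ('v \<Rightarrow> 'v) \<Rightarrow> ('v \<Rightarrow> 'v) set"
  for scale f g where
  one: "id \<in> gen_alg scale f g"
| gen1: "f \<in> gen_alg scale f g"
| gen2: "g \<in> gen_alg scale f g"
| add: "a \<in> gen_alg scale f g \<Longrightarrow> b \<in> gen_alg scale f g \<Longrightarrow> (\<lambda>x. a x + b x) \<in> gen_alg scale f g"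
| smult: "a \<in> gen_alg scale f g \<Longrightarrow> (\<lambda>x. scale c (a x)) \<in> gen_alg scale f g"
| comp: "a \<in> gen_alg scale f g \<Longrightarrow> b \<in> gen_alg scale f g \<Longrightarrow> a \<circ> b \<in> gen_alg scale f g"

definition gen_ideal :: "('k::field \<Rightarrow> 'v::ab_group_add \<Rightarrow> 'v) \<Rightarrow> ('v \<Rightarrow> 'v) \<Rightarrow> ('v \<Rightarrow> 'v) \<Rightarrow> ('v \<Rightarrow> 'v) set" where
  "gen_ideal scale f g = {(\<lambda>x. f (a x) + g (b x)) | a b. a \<in> gen_alg scale f g \<and> b \<in> gen_alg scale f g}"

definition finite_potent_set :: "('k::field \<Rightarrow> 'v::ab_group_add \<Rightarrow> 'v) \<Rightarrow> ('v \<Rightarrow> 'v) set \<Rightarrow> bool" where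
  "finite_potent_set scale F \<longleftrightarrow>
     (\<exists>n. \<forall>fs. length fs = n \<longrightarrow> set fs \<subseteq> F \<longrightarrow> fin_dim_sub scale (range (foldr (\<circ>) fs id)))"

end

theory Submission
  imports Defs
begin

text \<open>The relation \<open>(1 + \<phi>)(1 + \<psi>) = 1\<close> gives \<open>\<psi> = -\<phi>(1 + \<psi>)\<close>, so \<open>\<psi>\<close> is a right multiple
  of \<open>\<phi>\<close> inside \<open>k[\<phi>,\<psi>]\<close>. Consequently every element of \<open>k[\<phi>,\<psi>]\<close> has the form
  \<open>c + \<phi> b\<close>, hence \<open>a \<phi> = \<phi> (c + b \<phi>)\<close>: powers of \<open>\<phi>\<close> can be moved to the left past
  elements of \<open>k[\<phi>,\<psi>]\<close>. Every element of \<open>\<langle>\<phi>,\<psi>\<rangle>\<close> is \<open>\<phi> a\<close>, so a product of \<open>n\<close> of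
  them is \<open>\<phi>\<^sup>n b\<close>; its image lies in that of \<open>\<phi>\<^sup>n\<close>, which is finite dimensional for
  large \<open>n\<close>.\<close>

context vector_space
begin

lemma fin_dim_sub_subspace:
  assumes "fin_dim_sub scale T" and "subspace S" and "S \<subseteq> T"
  shows "fin_dim_sub scale S"
proof -
  obtain B where B: "finite B" "span B = T"
    using assms(1) unfolding fin_dim_sub_def by blast
  obtain C where C: "C \<subseteq> S" "independent C" "S \<subseteq> span C"
    by (rule basis_exists)
  have "finite C"
    using independent_span_bound[OF B(1) C(2)] C(1) assms(3) B(2) by blast
  moreover have "span C = S"
    using span_minimal[OF C(1) assms(2)] C(3) by (rule antisym)
  ultimately show ?thesis
    unfolding fin_dim_sub_def by blast
qed

lemma linear_funpow:
  assumes "Vector_Spaces.linear scale scale f"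
  shows "Vector_Spaces.linear scale scale (f ^^ n)"
proof (induction n)
  case 0
  show ?case using linear_id by (simp add: id_def)
next
  case (Suc n)
  then show ?case
    using Vector_Spaces.linear_compose[OF Suc assms] by (simp only: funpow.simps)
qed

lemma gen_alg_linear:
  assumes "Vector_Spaces.linear scale scale f" and "Vector_Spaces.linear scale scale g"
    and "a \<in> gen_alg scale f g"
  shows "Vector_Spaces.linear scale scale a"
  using assms(3)
proof induction
  interpret vector_space_pair scale scale by unfold_locales
  case one then show ?case by (rule linear_id)
  case gen1 show ?case by (fact assms(1))
  case gen2 show ?case by (fact assms(2))
  case add then show ?case using linear_compose_add by blast
  case smult then show ?case using linear_compose_scale_right by blast
  case comp then show ?case using Vector_Spaces.linear_compose by blast
qed

lemma eq_comp_neg_one_plus_if_one_plus_comp_eq_id: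
  assumes "Vector_Spaces.linear scale scale \<phi>"
    and "(\<lambda>x. x + \<phi> x) \<circ> (\<lambda>x. x + \<psi> x) = id"
  shows "\<psi> = \<phi> \<circ> (\<lambda>x. scale (-1) (x + \<psi> x))"
proof
  interpret L: Vector_Spaces.linear scale scale \<phi> by fact
  fix x
  have "x + \<psi> x + \<phi> (x + \<psi> x) = x"
    using fun_cong[OF assms(2), of x] by simp
  then have "\<phi> (x + \<psi> x) = - \<psi> x"
    by (metis add_diff_cancel_left' diff_add_cancel minus_diff_eq add.commute)
  then show "\<psi> x = (\<phi> \<circ> (\<lambda>x. scale (-1) (x + \<psi> x))) x"
    using L.neg[of "x + \<psi> x"] by (simp add: L.scale)
qed

lemma gen_alg_eq_scalar_plus_comp:
  assumes lin: "Vector_Spaces.linear scale scale \<phi>"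
    and p: "p \<in> gen_alg scale \<phi> \<psi>" and \<psi>: "\<psi> = \<phi> \<circ> p"
    and a: "a \<in> gen_alg scale \<phi> \<psi>"
  shows "\<exists>c b. b \<in> gen_alg scale \<phi> \<psi> \<and> a = (\<lambda>x. scale c x + \<phi> (b x))"
  using a
proof induction
  interpret L: Vector_Spaces.linear scale scale \<phi> by fact
  case one
  have "(\<lambda>x. scale 0 (id x)) \<in> gen_alg scale \<phi> \<psi>"
    by (rule gen_alg.smult[OF gen_alg.one])
  then show ?case
    by (intro exI[of _ 1] exI[of _ "\<lambda>x. scale 0 (id x)"]) (simp add: L.scale fun_eq_iff)
next
  case gen1
  show ?case
    by (intro exI[of _ 0] exI[of _ id]) (simp add: gen_alg.one[unfolded id_def] fun_eq_iff)
next
  case gen2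
  have "\<psi> x = \<phi> (p x)" for x
    by (simp add: \<psi>)
  then show ?case
    by (intro exI[of _ 0] exI[of _ p] conjI p) (simp add: fun_eq_iff)
next
  interpret L: Vector_Spaces.linear scale scale \<phi> by fact
  case (add a a')
  then obtain c b c' b' where
    "b \<in> gen_alg scale \<phi> \<psi>" "a = (\<lambda>x. scale c x + \<phi> (b x))"
    "b' \<in> gen_alg scale \<phi> \<psi>" "a' = (\<lambda>x. scale c' x + \<phi> (b' x))"
    by blast
  then show ?case
    by (intro exI[of _ "c + c'"] exI[of _ "\<lambda>x. b x + b' x"])
      (simp add: gen_alg.add L.add scale_left_distrib algebra_simps)
next
  interpret L: Vector_Spaces.linear scale scale \<phi> by fact
  case (smult a d)
  then obtain c b where "b \<in> gen_alg scale \<phi> \<psi>" "a = (\<lambda>x. scale c x + \<phi> (b x))"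
    by blast
  then show ?case
    by (intro exI[of _ "d * c"] exI[of _ "\<lambda>x. scale d (b x)"])
      (simp add: gen_alg.smult L.scale scale_right_distrib)
next
  interpret L: Vector_Spaces.linear scale scale \<phi> by fact
  case (comp a a')
  then obtain c b c' b' where
    b: "b \<in> gen_alg scale \<phi> \<psi>" "a = (\<lambda>x. scale c x + \<phi> (b x))" and
    b': "b' \<in> gen_alg scale \<phi> \<psi>" "a' = (\<lambda>x. scale c' x + \<phi> (b' x))"
    by blast
  have "(\<lambda>x. scale c (b' x) + (b \<circ> a') x) \<in> gen_alg scale \<phi> \<psi>"
    using b(1) b'(1) comp.hyps(2) by (intro gen_alg.add gen_alg.smult gen_alg.comp)
  moreover have "a \<circ> a' = (\<lambda>x. scale (c * c') x + \<phi> (scale c (b' x) + (b \<circ> a') x))"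
    by (simp add: b(2) b'(2) L.add L.scale scale_right_distrib add.assoc fun_eq_iff)
  ultimately show ?case by blast
qed

lemma gen_alg_comp_commute:
  assumes lin: "Vector_Spaces.linear scale scale \<phi>"
    and p: "p \<in> gen_alg scale \<phi> \<psi>" and \<psi>: "\<psi> = \<phi> \<circ> p"
    and a: "a \<in> gen_alg scale \<phi> \<psi>"
  shows "\<exists>b\<in>gen_alg scale \<phi> \<psi>. a \<circ> \<phi> = \<phi> \<circ> b"
proof -
  interpret L: Vector_Spaces.linear scale scale \<phi> by fact
  obtain c b where b: "b \<in> gen_alg scale \<phi> \<psi>" "a = (\<lambda>x. scale c x + \<phi> (b x))"
    using gen_alg_eq_scalar_plus_comp[OF lin p \<psi> a] by blast
  have "(\<lambda>x. scale c (id x) + (b \<circ> \<phi>) x) \<in> gen_alg scale \<phi> \<psi>"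
    using b(1) by (intro gen_alg.add gen_alg.smult gen_alg.one gen_alg.comp gen_alg.gen1)
  moreover have "a \<circ> \<phi> = \<phi> \<circ> (\<lambda>x. scale c (id x) + (b \<circ> \<phi>) x)"
    by (simp add: b(2) L.add L.scale fun_eq_iff)
  ultimately show ?thesis by blast
qed

lemma gen_alg_comp_funpow_commute:
  assumes lin: "Vector_Spaces.linear scale scale \<phi>"
    and p: "p \<in> gen_alg scale \<phi> \<psi>" and \<psi>: "\<psi> = \<phi> \<circ> p"
    and a: "a \<in> gen_alg scale \<phi> \<psi>"
  shows "\<exists>b\<in>gen_alg scale \<phi> \<psi>. a \<circ> \<phi> ^^ n = \<phi> ^^ n \<circ> b"
  using a
proof (induction n arbitrary: a)
  case 0
  then show ?case by auto
next
  case (Suc n)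
  obtain b where b: "b \<in> gen_alg scale \<phi> \<psi>" "a \<circ> \<phi> = \<phi> \<circ> b"
    using gen_alg_comp_commute[OF lin p \<psi> Suc.prems] by blast
  obtain b' where b': "b' \<in> gen_alg scale \<phi> \<psi>" "b \<circ> \<phi> ^^ n = \<phi> ^^ n \<circ> b'"
    using Suc.IH[OF b(1)] by blast
  have "a \<circ> \<phi> ^^ Suc n = \<phi> \<circ> (b \<circ> \<phi> ^^ n)"
    by (simp only: funpow.simps o_assoc b(2))
  also have "\<dots> = \<phi> ^^ Suc n \<circ> b'"
    by (simp only: b'(2) funpow.simps o_assoc)
  finally show ?case using b'(1) by blast
qed

lemma gen_ideal_eq_comp:
  assumes lin: "Vector_Spaces.linear scale scale \<phi>"
    and p: "p \<in> gen_alg scale \<phi> \<psi>" and \<psi>: "\<psi> = \<phi> \<circ> p"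
    and g: "g \<in> gen_ideal scale \<phi> \<psi>"
  shows "\<exists>a\<in>gen_alg scale \<phi> \<psi>. g = \<phi> \<circ> a"
proof -
  interpret L: Vector_Spaces.linear scale scale \<phi> by fact
  obtain a b where ab: "a \<in> gen_alg scale \<phi> \<psi>" "b \<in> gen_alg scale \<phi> \<psi>"
    "g = (\<lambda>x. \<phi> (a x) + \<psi> (b x))"
    using g unfolding gen_ideal_def by blast
  have "(\<lambda>x. a x + (p \<circ> b) x) \<in> gen_alg scale \<phi> \<psi>"
    using ab p by (intro gen_alg.add gen_alg.comp)
  moreover have "g = \<phi> \<circ> (\<lambda>x. a x + (p \<circ> b) x)"
    by (simp add: ab(3) \<psi> L.add fun_eq_iff)
  ultimately show ?thesis by blast
qed

lemma foldr_gen_ideal_eq_funpow_comp: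
  assumes lin: "Vector_Spaces.linear scale scale \<phi>"
    and p: "p \<in> gen_alg scale \<phi> \<psi>" and \<psi>: "\<psi> = \<phi> \<circ> p"
    and fs: "set fs \<subseteq> gen_ideal scale \<phi> \<psi>"
  shows "\<exists>b\<in>gen_alg scale \<phi> \<psi>. foldr (\<circ>) fs id = \<phi> ^^ length fs \<circ> b"
  using fs
proof (induction fs)
  case Nil
  show ?case by (rule bexI[of _ id]) (auto intro: gen_alg.one)
next
  case (Cons f fs)
  have "set fs \<subseteq> gen_ideal scale \<phi> \<psi>"
    using Cons.prems by simp
  then obtain b where b: "b \<in> gen_alg scale \<phi> \<psi>" "foldr (\<circ>) fs id = \<phi> ^^ length fs \<circ> b"
    using Cons.IH by blast
  obtain a where a: "a \<in> gen_alg scale \<phi> \<psi>" "f = \<phi> \<circ> a"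
    using gen_ideal_eq_comp[OF lin p \<psi>] Cons.prems by auto
  obtain a' where a': "a' \<in> gen_alg scale \<phi> \<psi>" "a \<circ> \<phi> ^^ length fs = \<phi> ^^ length fs \<circ> a'"
    using gen_alg_comp_funpow_commute[OF lin p \<psi> a(1)] by blast
  have "foldr (\<circ>) (f # fs) id = \<phi> \<circ> (a \<circ> \<phi> ^^ length fs) \<circ> b"
    by (simp add: a(2) b(2) o_assoc)
  also have "\<dots> = \<phi> ^^ length (f # fs) \<circ> (a' \<circ> b)"
    by (simp add: a'(2) o_assoc)
  finally show ?case using a'(1) b(1) gen_alg.comp by blast
qed

end

theorem proposition3p6:
  fixes scale :: "'k::field \<Rightarrow> 'v::ab_group_add \<Rightarrow> 'v"
    and \<phi> \<psi> :: "'v \<Rightarrow> 'v"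
  assumes "vector_space scale"
    and "Vector_Spaces.linear scale scale \<phi>" and "Vector_Spaces.linear scale scale \<psi>"
    and "finite_potent scale \<phi>" and "finite_potent scale \<psi>"
    and "(\<lambda>x. x + \<phi> x) \<circ> (\<lambda>x. x + \<psi> x) = id"
  shows "finite_potent_set scale (gen_ideal scale \<phi> \<psi>)"
proof -
  interpret vector_space scale by fact
  define p where "p = (\<lambda>x. scale (-1) (x + \<psi> x))"
  have p: "p \<in> gen_alg scale \<phi> \<psi>"
    unfolding p_def by (rule gen_alg.smult[OF gen_alg.add[OF gen_alg.one[unfolded id_def] gen_alg.gen2]])
  have \<psi>: "\<psi> = \<phi> \<circ> p"
    unfolding p_def using assms(2,6) by (rule eq_comp_neg_one_plus_if_one_plus_comp_eq_id)
  obtain N where N: "fin_dim_sub scale (range (\<phi> ^^ N))"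
    using assms(4) unfolding finite_potent_def by blast
  have "fin_dim_sub scale (range (foldr (\<circ>) fs id))"
    if len: "length fs = N" and fs: "set fs \<subseteq> gen_ideal scale \<phi> \<psi>" for fs
  proof -
    obtain b where b: "b \<in> gen_alg scale \<phi> \<psi>" "foldr (\<circ>) fs id = \<phi> ^^ N \<circ> b"
      using foldr_gen_ideal_eq_funpow_comp[OF assms(2) p \<psi> fs] len by blast
    interpret B: Vector_Spaces.linear scale scale "\<phi> ^^ N \<circ> b"
      using gen_alg_linear[OF assms(2,3) b(1)] linear_funpow[OF assms(2)]
      by (rule Vector_Spaces.linear_compose)
    have "subspace (range (\<phi> ^^ N \<circ> b))"
      using B.subspace_image[OF subspace_UNIV] by simp
    moreover have "range (\<phi> ^^ N \<circ> b) \<subseteq> range (\<phi> ^^ N)"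
      by auto
    ultimately show ?thesis
      using fin_dim_sub_subspace[OF N] b(2) by simp
  qed
  then show ?thesis
    unfolding finite_potent_set_def by blast
qed

end
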